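(* Let $t,q\ge 1$ and $s_1,\dots,s_t\ge 2$ be integers, and let $G^*=K_1\vee (C_{s_1}\cup\cdots\cup C_{s_t}\cup qK_2)$, where $C_2$ denotes a digon (two parallel edges between the same two vertices). If $n$ is the number of vertices of $G^*$, then the largest $Q$-eigenvalue $\sigma_1(G^* )$ equals the largest root of $\lambda^3-(n+7)\lambda^2+(7n+8)\lambda-12n+4q+12$.
   Context: Multigraphs without loops are allowed: the degree of a vertex is the number of edges incident to it, and the $(u,v)$ entry of the adjacency matrix $A$ is the number of edges joining $u$ and $v$. $Q=A+D$ with $D$ the diagonal degree matrix; $\sigma_1$ denotes its largest eigenvalue. $K_1\vee H$ adds one vertex adjacent (by a single edge) to every vertex of $H$; $\cup$ is disjoint union; $qK_2$ is $q$ disjoint edges. *)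

theory Defs
  imports "HOL-Computational_Algebra.Polynomial"
begin

text \<open>A (loopless) multigraph on a finite vertex set V is given by a symmetric
  function A :: 'v => 'v => nat, where A u v is the number of edges joining u and v
  (the adjacency matrix). Only the values on V x V matter.\<close>

definition mg_degree :: "'v set \<Rightarrow> ('v \<Rightarrow> 'v \<Rightarrow> nat) \<Rightarrow> 'v \<Rightarrow> nat" where
  "mg_degree V A u = (\<Sum>v\<in>V. A u v)"

definition signless_laplacian :: "'v set \<Rightarrow> ('v \<Rightarrow> 'v \<Rightarrow> nat) \<Rightarrow> 'v \<Rightarrow> 'v \<Rightarrow> real" where
  "signless_laplacian V A u v =
     real (A u v) + (if u = v then real (mg_degree V A u) else 0)"

definition is_eigenvalue_on :: "'v set \<Rightarrow> ('v \<Rightarrow> 'v \<Rightarrow> real) \<Rightarrow> real \<Rightarrow> bool" where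
  "is_eigenvalue_on V M mu \<longleftrightarrow>
     (\<exists>x :: 'v \<Rightarrow> real. (\<exists>u\<in>V. x u \<noteq> 0) \<and>
        (\<forall>u\<in>V. (\<Sum>v\<in>V. M u v * x v) = mu * x u))"

definition sigma1 :: "'v set \<Rightarrow> ('v \<Rightarrow> 'v \<Rightarrow> nat) \<Rightarrow> real" where
  "sigma1 V A = Max {mu. is_eigenvalue_on V (signless_laplacian V A) mu}"

datatype vtx = Hub | Cyc nat nat | Mt nat bool

text \<open>Vertices: the hub (the K_1); Cyc i j is vertex j (0 <= j < s i) of the i-th
  cycle (0 <= i < t); Mt k b are the two endpoints of the k-th copy of K_2 (k < q).\<close>
definition gstar_vertices :: "nat \<Rightarrow> (nat \<Rightarrow> nat) \<Rightarrow> nat \<Rightarrow> vtx set" where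
  "gstar_vertices t s q =
     {Hub} \<union> {Cyc i j | i j. i < t \<and> j < s i} \<union> {Mt k b | k b. k < q}"

text \<open>Edge multiplicity in the cycle C_s on vertices 0..s-1 with edges {j, (j+1) mod s};
  for s = 2 this yields the digon (two parallel edges between 0 and 1).\<close>
definition cyc_mult :: "nat \<Rightarrow> nat \<Rightarrow> nat \<Rightarrow> nat" where
  "cyc_mult s a b = card {j. j < s \<and>
      ((a = j \<and> b = (j + 1) mod s) \<or> (b = j \<and> a = (j + 1) mod s))}"

fun gstar_adj :: "(nat \<Rightarrow> nat) \<Rightarrow> vtx \<Rightarrow> vtx \<Rightarrow> nat" where
  "gstar_adj s Hub Hub = 0"
| "gstar_adj s Hub (Cyc i j) = 1"
| "gstar_adj s Hub (Mt k b) = 1"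
| "gstar_adj s (Cyc i j) Hub = 1"
| "gstar_adj s (Mt k b) Hub = 1"
| "gstar_adj s (Cyc i a) (Cyc i' b) = (if i = i' then cyc_mult (s i) a b else 0)"
| "gstar_adj s (Mt k b) (Mt k' b') = (if k = k' \<and> b \<noteq> b' then 1 else 0)"
| "gstar_adj s (Cyc i a) (Mt k b) = 0"
| "gstar_adj s (Mt k b) (Cyc i a) = 0"

end

theory Submission
  imports Defs "Jordan_Normal_Form.Spectral_Radius"
begin

text \<open>Split the vertices of G* into the hub, the cycle vertices and the matching vertices.
  Every cycle vertex has degree 3 and two neighbours on its cycle, every matching vertex has
  degree 2 and one matching neighbour, so this partition is equitable for Q, with quotient matrix
  [[n - 1, m, 2q], [1, 5, 0], [1, 0, 3]] where m = s_1 + ... + s_t. Its characteristic polynomial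
  is the given cubic, whose largest root r exceeds 5; then ((r-5)(r-3), r-3, r-5) is a positive
  eigenvector of the quotient and lifts to a positive Q-eigenvector for r. For a nonnegative
  symmetric matrix, an eigenvalue with a positive eigenvector dominates all other eigenvalues.\<close>

lemma finite_eigenvalues_on:
  assumes fin: "finite V"
  shows "finite {mu. is_eigenvalue_on V M mu}"
proof -
  define N where "N = card V"
  obtain f where f: "bij_betw f {0..<N} V"
    unfolding N_def using ex_bij_betw_nat_finite[OF fin] by blast
  define A :: "real mat" where "A = mat N N (\<lambda>(i,j). M (f i) (f j))"
  have "mu \<in> spectrum A" if eig: "is_eigenvalue_on V M mu" for mu
  proof -
    obtain x u where u: "u \<in> V" "x u \<noteq> 0" and ev: "\<forall>u\<in>V. (\<Sum>v\<in>V. M u v * x v) = mu * x u"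
      using eig unfolding is_eigenvalue_on_def by blast
    define w where "w = vec N (\<lambda>i. x (f i))"
    obtain i where "i < N" "f i = u"
      using f u unfolding bij_betw_def by (metis atLeastLessThan_iff imageE)
    with u have "w \<noteq> 0\<^sub>v N" unfolding w_def by (metis index_vec index_zero_vec(1))
    moreover have "A *\<^sub>v w = mu \<cdot>\<^sub>v w"
    proof (rule eq_vecI)
      fix k assume "k < dim_vec (mu \<cdot>\<^sub>v w)"
      then have k: "k < N" unfolding w_def by simp
      have "(A *\<^sub>v w) $ k = (\<Sum>j\<in>{0..<N}. M (f k) (f j) * x (f j))"
        using k unfolding A_def w_def by (simp add: scalar_prod_def)
      also have "\<dots> = (\<Sum>v\<in>V. M (f k) v * x v)"
        using sum.reindex_bij_betw[OF f, of "\<lambda>v. M (f k) v * x v"] by simp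
      also have "\<dots> = mu * x (f k)" using ev f k unfolding bij_betw_def by auto
      finally show "(A *\<^sub>v w) $ k = (mu \<cdot>\<^sub>v w) $ k" using k unfolding w_def by simp
    qed (simp add: A_def w_def)
    ultimately have "eigenvector A w mu" unfolding eigenvector_def A_def w_def by simp
    then show ?thesis unfolding spectrum_def eigenvalue_def by auto
  qed
  then have "{mu. is_eigenvalue_on V M mu} \<subseteq> spectrum A" by blast
  moreover have "A \<in> carrier_mat N N" unfolding A_def by simp
  ultimately show ?thesis using card_finite_spectrum(1) finite_subset by blast
qed

text \<open>Pairing the eigenvalue equation for x with the positive eigenvector y, which by symmetry
  is also a left eigenvector, gives |mu| (y . |x|) \<le> r (y . |x|).\<close>

lemma abs_eigenvalue_le_of_positive_eigenvector:
  assumes fin: "finite V"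
    and nonneg: "\<And>u v. u \<in> V \<Longrightarrow> v \<in> V \<Longrightarrow> M u v \<ge> 0"
    and sym: "\<And>u v. u \<in> V \<Longrightarrow> v \<in> V \<Longrightarrow> M u v = M v u"
    and ypos: "\<And>u. u \<in> V \<Longrightarrow> y u > 0"
    and yev: "\<And>u. u \<in> V \<Longrightarrow> (\<Sum>v\<in>V. M u v * y v) = r * y u"
    and ev: "is_eigenvalue_on V M mu"
  shows "\<bar>mu\<bar> \<le> r"
proof -
  obtain x u0 where u0: "u0 \<in> V" "x u0 \<noteq> 0" and ex: "\<forall>u\<in>V. (\<Sum>v\<in>V. M u v * x v) = mu * x u"
    using ev unfolding is_eigenvalue_on_def by blast
  have row: "\<bar>mu\<bar> * \<bar>x u\<bar> \<le> (\<Sum>v\<in>V. M u v * \<bar>x v\<bar>)" if u: "u \<in> V" for u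
  proof -
    have "\<bar>mu\<bar> * \<bar>x u\<bar> = \<bar>\<Sum>v\<in>V. M u v * x v\<bar>" using ex u by (simp add: abs_mult)
    also have "\<dots> \<le> (\<Sum>v\<in>V. \<bar>M u v * x v\<bar>)" by (rule sum_abs)
    also have "\<dots> = (\<Sum>v\<in>V. M u v * \<bar>x v\<bar>)" by (rule sum.cong) (auto simp: abs_mult nonneg u)
    finally show ?thesis .
  qed
  define S where "S = (\<Sum>u\<in>V. y u * \<bar>x u\<bar>)"
  have "0 < y u0 * \<bar>x u0\<bar>" using u0 ypos by simp
  also have "\<dots> \<le> S" unfolding S_def
    by (rule member_le_sum) (use u0 fin ypos in \<open>auto simp: less_imp_le\<close>)
  finally have S_pos: "S > 0" .
  have "\<bar>mu\<bar> * S = (\<Sum>u\<in>V. y u * (\<bar>mu\<bar> * \<bar>x u\<bar>))" unfolding S_def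
    by (simp add: sum_distrib_left algebra_simps)
  also have "\<dots> \<le> (\<Sum>u\<in>V. \<Sum>v\<in>V. y u * (M u v * \<bar>x v\<bar>))"
    unfolding sum_distrib_left[symmetric]
    by (rule sum_mono) (use row ypos in \<open>auto intro: mult_left_mono less_imp_le\<close>)
  also have "\<dots> = (\<Sum>v\<in>V. \<bar>x v\<bar> * (\<Sum>u\<in>V. M v u * y u))"
    by (subst sum.swap) (auto simp: sum_distrib_left sym algebra_simps intro!: sum.cong)
  also have "\<dots> = r * S" unfolding S_def using yev by (simp add: sum_distrib_left algebra_simps)
  finally show ?thesis using S_pos by simp
qed

lemma Max_eigenvalues_eq_of_positive_eigenvector:
  assumes fin: "finite V" and "V \<noteq> {}"
    and nonneg: "\<And>u v. u \<in> V \<Longrightarrow> v \<in> V \<Longrightarrow> M u v \<ge> 0"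
    and sym: "\<And>u v. u \<in> V \<Longrightarrow> v \<in> V \<Longrightarrow> M u v = M v u"
    and ypos: "\<And>u. u \<in> V \<Longrightarrow> y u > 0"
    and yev: "\<And>u. u \<in> V \<Longrightarrow> (\<Sum>v\<in>V. M u v * y v) = r * y u"
  shows "Max {mu. is_eigenvalue_on V M mu} = r"
proof (rule Max_eqI[OF finite_eigenvalues_on[OF fin]])
  obtain u where u: "u \<in> V" using \<open>V \<noteq> {}\<close> by blast
  have "y u \<noteq> 0" using ypos[OF u] by simp
  then show "r \<in> {mu. is_eigenvalue_on V M mu}"
    unfolding is_eigenvalue_on_def using u yev by (auto intro!: exI[of _ y])
next
  fix mu assume "mu \<in> {mu. is_eigenvalue_on V M mu}"
  then show "mu \<le> r"
    using abs_eigenvalue_le_of_positive_eigenvector[OF fin nonneg sym ypos yev] by force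
qed

lemma signless_laplacian_nonneg: "signless_laplacian V A u v \<ge> 0"
  unfolding signless_laplacian_def by simp

lemma signless_laplacian_sym:
  assumes "\<And>u v. A u v = A v u"
  shows "signless_laplacian V A u v = signless_laplacian V A v u"
  unfolding signless_laplacian_def using assms by simp

lemma signless_laplacian_mult:
  assumes "finite V" "u \<in> V"
  shows "(\<Sum>v\<in>V. signless_laplacian V A u v * y v)
           = (\<Sum>v\<in>V. real (A u v) * y v) + real (mg_degree V A u) * y u"
proof -
  have "(\<Sum>v\<in>V. signless_laplacian V A u v * y v)
          = (\<Sum>v\<in>V. real (A u v) * y v + (if u = v then real (mg_degree V A u) * y v else 0))"
    unfolding signless_laplacian_def by (rule sum.cong) (auto simp: distrib_right)
  also have "\<dots> = (\<Sum>v\<in>V. real (A u v) * y v) + real (mg_degree V A u) * y u"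
    using assms by (simp add: sum.distrib)
  finally show ?thesis .
qed

lemma sigma1_eq_of_positive_eigenvector:
  assumes "finite V" "V \<noteq> {}" "\<And>u v. A u v = A v u"
    and "\<And>u. u \<in> V \<Longrightarrow> y u > 0"
    and "\<And>u. u \<in> V \<Longrightarrow> (\<Sum>v\<in>V. signless_laplacian V A u v * y v) = r * y u"
  shows "sigma1 V A = r"
  unfolding sigma1_def using assms
  by (intro Max_eigenvalues_eq_of_positive_eigenvector)
     (auto simp: signless_laplacian_nonneg intro: signless_laplacian_sym)

lemma Max_roots_gt:
  fixes p :: "real poly"
  assumes "a \<le> b" "poly p a < 0" "poly p b \<ge> 0"
  shows "poly p (Max {x. poly p x = 0}) = 0" and "a < Max {x. poly p x = 0}"
proof -
  have fin: "finite {x. poly p x = 0}" using assms(2) by (intro poly_roots_finite) auto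
  obtain x0 where x0: "a \<le> x0" "poly p x0 = 0"
    using IVT[of "poly p" a 0 b] assms by auto
  then have "a < x0" using assms(2) by (cases "a = x0") auto
  also have "x0 \<le> Max {x. poly p x = 0}" using fin x0 by (intro Max_ge) auto
  finally show "a < Max {x. poly p x = 0}" .
  show "poly p (Max {x. poly p x = 0}) = 0" using Max_in[OF fin] x0 by auto
qed

lemma cubic_largest_root:
  fixes m q n :: real
  assumes "m > 0" "q \<ge> 0" "n = 1 + m + 2 * q"
  defines "r \<equiv> Max {x. poly [:12 - 12 * n + 4 * q, 7 * n + 8, - (n + 7), 1:] x = 0}"
  shows "5 < r"
    and "(m + 2 * q) * ((r - 5) * (r - 3)) + m * (r - 3) + 2 * q * (r - 5) = r * ((r - 5) * (r - 3))"
proof -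
  define P where "P = [:12 - 12 * n + 4 * q, 7 * n + 8, - (n + 7), 1:]"
  have P_eq: "poly P x = (x - (m + 2 * q)) * (x - 5) * (x - 3) - m * (x - 3) - 2 * q * (x - 5)" for x
    unfolding P_def assms(3) by (simp add: algebra_simps power2_eq_square)
  have "poly P (m + 2 * q + 5) = 4 * m * (m + 2 * q + 2) + 8 * q * (m + 2 * q) + 20 * q"
    unfolding P_eq by (simp add: algebra_simps)
  also have "\<dots> \<ge> 0" using assms(1,2) by (intro add_nonneg_nonneg mult_nonneg_nonneg) auto
  finally have "poly P r = 0" and "5 < r"
    using Max_roots_gt[of 5 "m + 2 * q + 5" P] assms(1,2) unfolding r_def P_def[symmetric] P_eq
    by simp_all
  moreover have "r * ((r - 5) * (r - 3))
      - ((m + 2 * q) * ((r - 5) * (r - 3)) + m * (r - 3) + 2 * q * (r - 5)) = poly P r"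
    unfolding P_eq by (simp add: algebra_simps)
  ultimately show "5 < r"
    and "(m + 2 * q) * ((r - 5) * (r - 3)) + m * (r - 3) + 2 * q * (r - 5) = r * ((r - 5) * (r - 3))"
    by simp_all
qed

lemma cyc_mult_sym: "cyc_mult s a b = cyc_mult s b a"
  unfolding cyc_mult_def by (rule arg_cong[where f=card]) auto

lemma cyc_mult_eq:
  assumes s: "s \<ge> 2" and a: "a < s" and b: "b < s"
  shows "cyc_mult s a b = (if b = (if Suc a = s then 0 else Suc a) then 1 else 0)
                         + (if b = (if a = 0 then s - 1 else a - 1) then 1 else 0)"
proof -
  define S1 where "S1 = (if b = (if Suc a = s then 0 else Suc a) then {a} else {})"
  define S2 where "S2 = (if b = (if a = 0 then s - 1 else a - 1) then {b} else {})"
  have "{j. j < s \<and> ((a = j \<and> b = (j + 1) mod s) \<or> (b = j \<and> a = (j + 1) mod s))} = S1 \<union> S2"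
    using a b s unfolding S1_def S2_def by (auto simp: mod_Suc split: if_splits)
  moreover have "S1 \<inter> S2 = {}"
    using a b s unfolding S1_def S2_def by (auto split: if_splits)
  ultimately have "cyc_mult s a b = card S1 + card S2"
    unfolding cyc_mult_def by (simp add: card_Un_disjoint S1_def S2_def)
  then show ?thesis unfolding S1_def S2_def by simp
qed

lemma sum_cyc_mult:
  assumes "s \<ge> 2" "a < s"
  shows "(\<Sum>b<s. cyc_mult s a b) = 2"
proof -
  have "(\<Sum>b<s. cyc_mult s a b) = (\<Sum>b<s. (if b = (if Suc a = s then 0 else Suc a) then 1 else 0)
                         + (if b = (if a = 0 then s - 1 else a - 1) then 1 else 0))"
    by (rule sum.cong) (auto simp: cyc_mult_eq assms)
  also have "\<dots> = 2" using assms by (auto simp: sum.distrib)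
  finally show ?thesis .
qed

lemma gstar_adj_sym: "gstar_adj s u v = gstar_adj s v u"
  by (cases u; cases v) (auto simp: cyc_mult_sym)

lemma gstar_vertices_eq:
  "gstar_vertices t s q = insert Hub ((\<lambda>(i,j). Cyc i j) ` (SIGMA i:{..<t}. {..<s i})
      \<union> (\<lambda>(k,b). Mt k b) ` ({..<q} \<times> UNIV))"
  unfolding gstar_vertices_def by auto

lemma finite_gstar_vertices: "finite (gstar_vertices t s q)"
  unfolding gstar_vertices_eq by auto

lemma gstar_vertices_cases:
  assumes "u \<in> gstar_vertices t s q"
  obtains "u = Hub" | i j where "u = Cyc i j" "i < t" "j < s i" | k b where "u = Mt k b" "k < q"
  using assms unfolding gstar_vertices_def by auto

lemma sum_gstar_vertices:
  "(\<Sum>v\<in>gstar_vertices t s q. g v) = g Hub + (\<Sum>i<t. \<Sum>j<s i. g (Cyc i j))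
      + (\<Sum>k<q. g (Mt k True) + g (Mt k False))"
proof -
  let ?C = "(\<lambda>(i,j). Cyc i j) ` (SIGMA i:{..<t}. {..<s i})"
  let ?M = "(\<lambda>(k,b). Mt k b) ` ({..<q} \<times> (UNIV::bool set))"
  have "(\<Sum>v\<in>gstar_vertices t s q. g v) = g Hub + (\<Sum>v\<in>?C \<union> ?M. g v)"
    unfolding gstar_vertices_eq by (subst sum.insert) auto
  also have "(\<Sum>v\<in>?C \<union> ?M. g v) = (\<Sum>v\<in>?C. g v) + (\<Sum>v\<in>?M. g v)"
    by (rule sum.union_disjoint) auto
  also have "(\<Sum>v\<in>?C. g v) = (\<Sum>i<t. \<Sum>j<s i. g (Cyc i j))"
    by (subst sum.reindex) (auto simp: inj_on_def sum.Sigma prod.case_distrib)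
  also have "(\<Sum>v\<in>?M. g v) = (\<Sum>k<q. \<Sum>b\<in>UNIV. g (Mt k b))"
    by (subst sum.reindex) (auto simp: inj_on_def sum.cartesian_product prod.case_distrib)
  also have "\<dots> = (\<Sum>k<q. g (Mt k True) + g (Mt k False))" by (simp add: UNIV_bool add.commute)
  finally show ?thesis by (simp add: add.assoc)
qed

lemma card_gstar_vertices: "card (gstar_vertices t s q) = 1 + (\<Sum>i<t. s i) + 2 * q"
  using sum_gstar_vertices[of "\<lambda>_. 1::nat" t s q] by simp

definition gstar_class_vec :: "real \<Rightarrow> real \<Rightarrow> real \<Rightarrow> vtx \<Rightarrow> real" where
  "gstar_class_vec a b c = case_vtx a (\<lambda>_ _. b) (\<lambda>_ _. c)"

lemma gstar_class_vec_simps [simp]: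
  "gstar_class_vec a b c Hub = a"
  "gstar_class_vec a b c (Cyc i j) = b"
  "gstar_class_vec a b c (Mt k e) = c"
  by (simp_all add: gstar_class_vec_def)

lemma gstar_class_vec_one: "gstar_class_vec 1 1 1 v = 1"
  by (cases v) simp_all

lemma gstar_adj_class_vec_Hub:
  "(\<Sum>v\<in>gstar_vertices t s q. real (gstar_adj s Hub v) * gstar_class_vec a b c v)
     = real (\<Sum>i<t. s i) * b + 2 * real q * c"
  by (subst sum_gstar_vertices) (simp add: sum_distrib_right)

lemma gstar_adj_class_vec_Cyc:
  assumes "i < t" "j < s i" "s i \<ge> 2"
  shows "(\<Sum>v\<in>gstar_vertices t s q. real (gstar_adj s (Cyc i j) v) * gstar_class_vec a b c v)
           = a + 2 * b"
proof -
  have "(\<Sum>i'<t. \<Sum>j'<s i'. real (gstar_adj s (Cyc i j) (Cyc i' j')) * b)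
          = (\<Sum>i'<t. if i' = i then (\<Sum>j'<s i. real (cyc_mult (s i) j j') * b) else 0)"
    by (rule sum.cong) auto
  also have "\<dots> = real (\<Sum>j'<s i. cyc_mult (s i) j j') * b"
    using assms(1) by (simp add: sum_distrib_right)
  also have "\<dots> = 2 * b" using assms(2,3) by (simp add: sum_cyc_mult)
  finally show ?thesis by (subst sum_gstar_vertices) simp
qed

lemma gstar_adj_class_vec_Mt:
  assumes "k < q"
  shows "(\<Sum>v\<in>gstar_vertices t s q. real (gstar_adj s (Mt k e) v) * gstar_class_vec a b c v)
           = a + c"
proof -
  have "(\<Sum>k'<q. real (gstar_adj s (Mt k e) (Mt k' True)) * c
                  + real (gstar_adj s (Mt k e) (Mt k' False)) * c)
          = (\<Sum>k'<q. if k' = k then c else 0)"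
    by (rule sum.cong) auto
  also have "\<dots> = c" using assms by simp
  finally show ?thesis by (subst sum_gstar_vertices) simp
qed

lemma gstar_degree:
  assumes "\<forall>i<t. s i \<ge> 2" "u \<in> gstar_vertices t s q"
  shows "real (mg_degree (gstar_vertices t s q) (gstar_adj s) u)
           = (case u of Hub \<Rightarrow> real (\<Sum>i<t. s i) + 2 * real q | Cyc _ _ \<Rightarrow> 3 | Mt _ _ \<Rightarrow> 2)"
proof -
  have "real (mg_degree (gstar_vertices t s q) (gstar_adj s) u)
          = (\<Sum>v\<in>gstar_vertices t s q. real (gstar_adj s u v) * gstar_class_vec 1 1 1 v)"
    unfolding mg_degree_def gstar_class_vec_one by simp
  with assms(2) show ?thesis
    by (cases rule: gstar_vertices_cases) (use assms(1) in \<open>simp_all add: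
        gstar_adj_class_vec_Hub gstar_adj_class_vec_Cyc gstar_adj_class_vec_Mt\<close>)
qed

lemma gstar_signless_laplacian_class_vec:
  assumes "\<forall>i<t. s i \<ge> 2" "u \<in> gstar_vertices t s q"
  defines "m \<equiv> real (\<Sum>i<t. s i)"
  shows "(\<Sum>v\<in>gstar_vertices t s q. signless_laplacian (gstar_vertices t s q) (gstar_adj s) u v
            * gstar_class_vec a b c v)
         = gstar_class_vec ((m + 2 * real q) * a + m * b + 2 * real q * c) (a + 5 * b) (a + 3 * c) u"
proof -
  note Q_mult = signless_laplacian_mult[OF finite_gstar_vertices assms(2), of "gstar_adj s"]
    and deg = gstar_degree[OF assms(1,2)]
  from assms(2) show ?thesis
  proof (cases rule: gstar_vertices_cases)
    case 1
    then show ?thesis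
      using Q_mult deg gstar_adj_class_vec_Hub[where t=t and s=s and q=q and a=a and b=b and c=c]
      by (simp add: m_def algebra_simps)
  next
    case (2 i j)
    moreover have "s i \<ge> 2" using 2 assms(1) by simp
    ultimately show ?thesis
      using Q_mult deg
        gstar_adj_class_vec_Cyc[where s=s and i=i and j=j and t=t and q=q and a=a and b=b and c=c]
      by (simp add: algebra_simps)
  next
    case (3 k e)
    then show ?thesis
      using Q_mult deg gstar_adj_class_vec_Mt[OF 3(2), where s=s and e=e and t=t and a=a and b=b and c=c]
      by (simp add: algebra_simps)
  qed
qed

theorem lemma3p3:
  fixes t q :: nat and s :: "nat \<Rightarrow> nat" and n :: nat
  assumes "t \<ge> 1" and "q \<ge> 1" and "\<forall>i<t. s i \<ge> 2"
    and "n = card (gstar_vertices t s q)"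
  shows "sigma1 (gstar_vertices t s q) (gstar_adj s) =
    Max {mu::real. poly [:12 - 12 * real n + 4 * real q, 7 * real n + 8, - (real n + 7), 1:] mu = 0}"
proof -
  define V where "V = gstar_vertices t s q"
  define m where "m = real (\<Sum>i<t. s i)"
  define r where "r = Max {x. poly [:12 - 12 * real n + 4 * real q, 7 * real n + 8, - (real n + 7), 1:] x = 0}"
  have n: "real n = 1 + m + 2 * real q" using assms(4) card_gstar_vertices unfolding m_def by simp
  have "2 \<le> s 0" using assms(1,3) by simp
  also have "s 0 \<le> (\<Sum>i<t. s i)" using assms(1) by (intro member_le_sum) auto
  finally have "m > 0" unfolding m_def by (simp only: of_nat_0_less_iff)
  note r_gt = cubic_largest_root(1)[OF this of_nat_0_le_iff n, folded r_def]
    and hub_row = cubic_largest_root(2)[OF this of_nat_0_le_iff n, folded r_def]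
  define y where "y = gstar_class_vec ((r - 5) * (r - 3)) (r - 3) (r - 5)"
  have "(\<Sum>v\<in>V. signless_laplacian V (gstar_adj s) u v * y v) = r * y u" if u: "u \<in> V" for u
  proof -
    have "(\<Sum>v\<in>V. signless_laplacian V (gstar_adj s) u v * y v)
        = gstar_class_vec ((m + 2 * real q) * ((r - 5) * (r - 3)) + m * (r - 3) + 2 * real q * (r - 5))
            ((r - 5) * (r - 3) + 5 * (r - 3)) ((r - 5) * (r - 3) + 3 * (r - 5)) u"
      using gstar_signless_laplacian_class_vec[OF assms(3) u[unfolded V_def]]
      unfolding V_def y_def m_def .
    also have "\<dots> = r * y u" unfolding hub_row y_def by (cases u) (simp_all add: algebra_simps)
    finally show ?thesis .
  qed
  moreover have "y u > 0" for u using r_gt unfolding y_def by (cases u) auto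
  moreover have "Hub \<in> V" unfolding V_def gstar_vertices_def by simp
  ultimately have "sigma1 V (gstar_adj s) = r"
    using finite_gstar_vertices[of t s q, folded V_def]
    by (intro sigma1_eq_of_positive_eigenvector[where y = y]) (auto intro: gstar_adj_sym)
  then show ?thesis unfolding V_def r_def .
qed

end
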